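(* Let $\Gamma=\langle x,y,z\mid xy^{-1}=yz^{-1},\ xy^{-1}=zx^{-1}\rangle$ with generating set $\Delta=\{x,y,z\}$. Then $W=W_xU_x+W_yU_y+W_zU_z$ is a homogeneous scalar quantum walk on $C_\Delta(\Gamma)$ if and only if, up to a global phase, $W_x=\tfrac13(1+e^{i\phi_1}+e^{i\phi_2})$, $W_y=\tfrac13(1+e^{2\pi i/3}e^{i\phi_1}+e^{-2\pi i/3}e^{i\phi_2})$, $W_z=\tfrac13(1+e^{-2\pi i/3}e^{i\phi_1}+e^{2\pi i/3}e^{i\phi_2})$ for some real $\phi_1,\phi_2$ (with these three values nonzero). In particular such a walk exists.
   Context: The Cayley graph $C_\Delta(\Gamma)$ has vertex set $\Gamma$ and directed edges $(g,g\delta)$, $g\in\Gamma,\delta\in\Delta$. Let $\ell^2(\Gamma)$ have orthonormal basis $\{|g\rangle\}_{g\in\Gamma}$ and for $\delta\in\Gamma$ let $U_\delta|g\rangle=|g\delta\rangle$. A homogeneous scalar quantum walk on $C_\Delta(\Gamma)$ is a unitary operator $W=\sum_{\delta\in\Delta}W_\delta U_\delta$ with all complex coefficients $W_\delta$ nonzero. "Up to a global phase" means that all coefficients may be multiplied by a common complex number of modulus one. *)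

theory Defs
  imports "HOL-Analysis.Analysis"
begin

datatype gen = X | Y | Z

text \<open>A letter (g, True) stands for g, (g, False) for g^-1.\<close>
type_synonym letter = "gen \<times> bool"

definition linv :: "letter \<Rightarrow> letter" where
  "linv l = (fst l, \<not> snd l)"

text \<open>Relator words: (x y^-1)(y z^-1)^-1 = x y^-1 z y^-1 and (x y^-1)(z x^-1)^-1 = x y^-1 x z^-1.\<close>
definition relators :: "letter list set" where
  "relators = {[(X,True),(Y,False),(Z,True),(Y,False)], [(X,True),(Y,False),(X,True),(Z,False)]}"

inductive peq :: "letter list \<Rightarrow> letter list \<Rightarrow> bool" where
  peq_refl: "peq w w"
| peq_sym: "peq u w \<Longrightarrow> peq w u"
| peq_trans: "peq u v \<Longrightarrow> peq v w \<Longrightarrow> peq u w"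
| peq_free: "peq (u @ [l, linv l] @ v) (u @ v)"
| peq_rel: "r \<in> relators \<Longrightarrow> peq (u @ r @ v) (u @ v)"

definition cls :: "letter list \<Rightarrow> letter list set" where
  "cls w = {v. peq w v}"

definition Gamma :: "letter list set set" where
  "Gamma = range cls"

definition rmul_inv :: "letter list set \<Rightarrow> gen \<Rightarrow> letter list set" where
  "rmul_inv C g = cls ((SOME w. w \<in> C) @ [(g, False)])"

definition l2 :: "(letter list set \<Rightarrow> complex) set" where
  "l2 = {f. (\<forall>h. h \<notin> Gamma \<longrightarrow> f h = 0) \<and> (\<lambda>h. (cmod (f h))^2) summable_on Gamma}"

definition l2_inner :: "(letter list set \<Rightarrow> complex) \<Rightarrow> (letter list set \<Rightarrow> complex) \<Rightarrow> complex" where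
  "l2_inner f g = infsum (\<lambda>h. cnj (f h) * g h) Gamma"

definition unitary_l2 :: "((letter list set \<Rightarrow> complex) \<Rightarrow> (letter list set \<Rightarrow> complex)) \<Rightarrow> bool" where
  "unitary_l2 T \<longleftrightarrow>
     (\<forall>f\<in>l2. T f \<in> l2) \<and>
     (\<forall>f\<in>l2. \<forall>g\<in>l2. l2_inner (T f) (T g) = l2_inner f g) \<and>
     (\<forall>g\<in>l2. \<exists>f\<in>l2. T f = g)"

text \<open>U_g |h> = |h g>, i.e. (U_g f)(h) = f(h g^-1).\<close>
definition Uop :: "gen \<Rightarrow> (letter list set \<Rightarrow> complex) \<Rightarrow> (letter list set \<Rightarrow> complex)" where
  "Uop g f = (\<lambda>h. if h \<in> Gamma then f (rmul_inv h g) else 0)"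

definition walk :: "complex \<Rightarrow> complex \<Rightarrow> complex \<Rightarrow> (letter list set \<Rightarrow> complex) \<Rightarrow> (letter list set \<Rightarrow> complex)" where
  "walk Wx Wy Wz f = (\<lambda>h. Wx * Uop X f h + Wy * Uop Y f h + Wz * Uop Z f h)"

definition hsqw :: "complex \<Rightarrow> complex \<Rightarrow> complex \<Rightarrow> bool" where
  "hsqw Wx Wy Wz \<longleftrightarrow> Wx \<noteq> 0 \<and> Wy \<noteq> 0 \<and> Wz \<noteq> 0 \<and> unitary_l2 (walk Wx Wy Wz)"

end

theory Submission
  imports Defs
begin

(* Put a = x y^-1 and b = x^-1 y. The relators and their cyclic conjugates make all quotients
   d d'^-1 of distinct generators equal to a or a^-1, and all quotients d^-1 d' equal to b or
   b^-1. Hence W* W = N + S U_(a^-1) + conj S U_a and W W* = N + S U_b + conj S U_(b^-1) with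
   N = |W_x|^2 + |W_y|^2 + |W_z|^2 and S = conj W_x W_y + conj W_y W_z + conj W_z W_x. As a and
   a^2 are nontrivial, W is unitary exactly when N = 1 and S = 0, i.e. when the circulant matrix
   with first row (W_x, W_y, W_z) is unitary. The discrete Fourier transform diagonalises that
   circulant, so this happens exactly when its three eigenvalues are unimodular; writing them as
   e^(i theta), e^(i theta) e^(i phi1), e^(i theta) e^(i phi2) and inverting the transform gives
   the stated parametrisation. *)

section \<open>Words in the generators\<close>

lemma peq_append_cong: "peq u v \<Longrightarrow> peq (p @ u @ s) (p @ v @ s)"
proof (induction u v arbitrary: p s rule: peq.induct)
  case (peq_refl w) then show ?case by (rule peq.peq_refl)
next
  case (peq_sym u v) then show ?case by (blast intro: peq.peq_sym)
next
  case (peq_trans u v w) then show ?case by (blast intro: peq.peq_trans)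
next
  case (peq_free u l v) then show ?case using peq.peq_free[of "p @ u" l "v @ s"] by simp
next
  case (peq_rel r u v) then show ?case using peq.peq_rel[of r "p @ u" "v @ s"] by simp
qed

definition word_inv :: "letter list \<Rightarrow> letter list" where
  "word_inv w = rev (map linv w)"

lemma linv_linv [simp]: "linv (linv l) = l"
  by (simp add: linv_def)

lemma word_inv_simps [simp]:
  "word_inv [] = []"
  "word_inv (l # w) = word_inv w @ [linv l]"
  "word_inv (word_inv w) = w"
  by (simp_all add: word_inv_def rev_map comp_def)

lemma peq_append_word_inv: "peq (w @ word_inv w) []"
proof (induction w)
  case Nil
  show ?case by (simp add: peq_refl)
next
  case (Cons l w)
  have "peq ([l] @ (w @ word_inv w) @ [linv l]) ([l] @ [] @ [linv l])"
    using Cons by (rule peq_append_cong)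
  then have "peq ((l # w) @ word_inv (l # w)) [l, linv l]"
    by simp
  moreover have "peq [l, linv l] []"
    using peq_free[of "[]" l "[]"] by simp
  ultimately show ?case by (rule peq_trans)
qed

lemma peq_word_inv_append: "peq (word_inv w @ w) []"
  using peq_append_word_inv[of "word_inv w"] by simp

lemma peq_word_inv_if_append_Nil:
  assumes "peq (u @ v) []" shows "peq u (word_inv v)"
proof -
  have "peq u (u @ v @ word_inv v)"
    using peq_sym[OF peq_append_cong[OF peq_append_word_inv[of v], of u "[]"]] by simp
  moreover have "peq (u @ v @ word_inv v) (word_inv v)"
    using peq_append_cong[OF assms, of "[]" "word_inv v"] by simp
  ultimately show ?thesis by (rule peq_trans)
qed

lemma peq_rotate:
  assumes "peq (u @ v) []" shows "peq (v @ u) []"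
proof -
  have "peq (v @ u) (v @ u @ v @ word_inv v)"
    using peq_sym[OF peq_append_cong[OF peq_append_word_inv[of v], of "v @ u" "[]"]] by simp
  moreover have "peq (v @ u @ v @ word_inv v) (v @ word_inv v)"
    using peq_append_cong[OF assms, of v "word_inv v"] by simp
  ultimately have "peq (v @ u) (v @ word_inv v)"
    by (rule peq_trans)
  then show ?thesis
    using peq_append_word_inv by (rule peq_trans)
qed

lemma peq_word_inv:
  assumes "peq u v" shows "peq (word_inv u) (word_inv v)"
proof -
  have "peq (u @ word_inv v) (v @ word_inv v)"
    using peq_append_cong[OF assms, of "[]" "word_inv v"] by simp
  then have "peq (u @ word_inv v) []"
    using peq_append_word_inv by (rule peq_trans)
  then have "peq (word_inv v @ u) []"
    by (rule peq_rotate)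
  then have "peq (word_inv v) (word_inv u)"
    by (simp add: peq_word_inv_if_append_Nil)
  then show ?thesis by (rule peq_sym)
qed

lemma relators_peq_Nil:
  "peq [(X, True), (Y, False), (Z, True), (Y, False)] []"
  "peq [(X, True), (Y, False), (X, True), (Z, False)] []"
  using peq_rel[of _ "[]" "[]"] by (simp_all add: relators_def)

lemma peq_right_quotients:
  "peq [(Y, True), (Z, False)] [(X, True), (Y, False)]"
  "peq [(Z, True), (X, False)] [(X, True), (Y, False)]"
  "peq [(Z, True), (Y, False)] [(Y, True), (X, False)]"
  "peq [(X, True), (Z, False)] [(Y, True), (X, False)]"
proof -
  have 1: "peq [(X, True), (Y, False)] [(Y, True), (Z, False)]"
    using peq_word_inv_if_append_Nil[of "[(X, True), (Y, False)]" "[(Z, True), (Y, False)]"]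
      relators_peq_Nil(1) by (simp add: linv_def)
  have 2: "peq [(X, True), (Y, False)] [(Z, True), (X, False)]"
    using peq_word_inv_if_append_Nil[of "[(X, True), (Y, False)]" "[(X, True), (Z, False)]"]
      relators_peq_Nil(2) by (simp add: linv_def)
  show "peq [(Y, True), (Z, False)] [(X, True), (Y, False)]"
    using 1 by (rule peq_sym)
  show "peq [(Z, True), (X, False)] [(X, True), (Y, False)]"
    using 2 by (rule peq_sym)
  show "peq [(Z, True), (Y, False)] [(Y, True), (X, False)]"
    using peq_sym[OF peq_word_inv[OF 1]] by (simp add: linv_def)
  show "peq [(X, True), (Z, False)] [(Y, True), (X, False)]"
    using peq_sym[OF peq_word_inv[OF 2]] by (simp add: linv_def)
qed

lemma peq_left_quotients:
  "peq [(Y, False), (Z, True)] [(X, False), (Y, True)]"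
  "peq [(Z, False), (X, True)] [(X, False), (Y, True)]"
  "peq [(Z, False), (Y, True)] [(Y, False), (X, True)]"
  "peq [(X, False), (Z, True)] [(Y, False), (X, True)]"
proof -
  have "peq ([(Y, False), (Z, True), (Y, False)] @ [(X, True)]) []"
    using peq_rotate[of "[(X, True)]" "[(Y, False), (Z, True), (Y, False)]"] relators_peq_Nil(1) by simp
  then have 1: "peq [(Y, False), (Z, True)] [(X, False), (Y, True)]"
    using peq_word_inv_if_append_Nil[of "[(Y, False), (Z, True)]" "[(Y, False), (X, True)]"]
    by (simp add: linv_def)
  have "peq ([(Z, False)] @ [(X, True), (Y, False), (X, True)]) []"
    using peq_rotate[of "[(X, True), (Y, False), (X, True)]" "[(Z, False)]"] relators_peq_Nil(2) by simp
  then have 2: "peq [(Z, False), (X, True)] [(X, False), (Y, True)]"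
    using peq_word_inv_if_append_Nil[of "[(Z, False), (X, True)]" "[(Y, False), (X, True)]"]
    by (simp add: linv_def)
  show "peq [(Y, False), (Z, True)] [(X, False), (Y, True)]"
    "peq [(Z, False), (X, True)] [(X, False), (Y, True)]"
    using 1 2 .
  show "peq [(Z, False), (Y, True)] [(Y, False), (X, True)]"
    "peq [(X, False), (Z, True)] [(Y, False), (X, True)]"
    using peq_word_inv[OF 1] peq_word_inv[OF 2] by (simp_all add: linv_def)
qed

(* The homomorphism from Gamma onto Z/3 sending x, y, z to 0, 2, 1; it shows that
   x y^-1 and its square are nontrivial. *)
fun gen_deg :: "gen \<Rightarrow> int" where
  "gen_deg X = 0" | "gen_deg Y = 2" | "gen_deg Z = 1"

definition letter_deg :: "letter \<Rightarrow> int" where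
  "letter_deg l = (if snd l then gen_deg (fst l) else - gen_deg (fst l))"

definition word_deg :: "letter list \<Rightarrow> int" where
  "word_deg w = sum_list (map letter_deg w) mod 3"

lemma word_deg_peq: "peq u v \<Longrightarrow> word_deg u = word_deg v"
proof (induction rule: peq.induct)
  case (peq_free u l v)
  then show ?case
    by (simp add: word_deg_def letter_deg_def linv_def mod_add_left_eq mod_add_right_eq)
next
  case (peq_rel r u v)
  then show ?case
    by (auto simp: relators_def word_deg_def letter_deg_def) (simp_all add: algebra_simps)
qed simp_all

lemma cls_eq_iff: "cls u = cls v \<longleftrightarrow> peq u v"
proof
  assume "cls u = cls v"
  moreover have "v \<in> cls v" by (simp add: cls_def peq_refl)
  ultimately have "v \<in> cls u" by simp
  then show "peq u v" by (simp add: cls_def)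
next
  assume "peq u v"
  then show "cls u = cls v" unfolding cls_def by (auto intro: peq_trans peq_sym)
qed

lemma cls_in_Gamma [simp]: "cls w \<in> Gamma"
  by (simp add: Gamma_def)

lemma GammaE:
  assumes "C \<in> Gamma" obtains w where "C = cls w"
  using assms by (auto simp: Gamma_def)

lemma cls_xy_inv_nontrivial:
  "cls [(X, True), (Y, False)] \<noteq> cls []"
  "cls [(Y, True), (X, False)] \<noteq> cls []"
  "cls [(Y, True), (X, False), (Y, True), (X, False)] \<noteq> cls []"
  by (auto dest!: word_deg_peq simp: cls_eq_iff word_deg_def letter_deg_def)

definition rmul_word :: "letter list set \<Rightarrow> letter list \<Rightarrow> letter list set" where
  "rmul_word C w = cls ((SOME v. v \<in> C) @ w)"

lemma rmul_inv_eq_rmul_word: "rmul_inv C g = rmul_word C [(g, False)]"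
  by (simp add: rmul_inv_def rmul_word_def)

lemma rmul_word_cls [simp]: "rmul_word (cls v) w = cls (v @ w)"
proof -
  have "v \<in> cls v" by (simp add: cls_def peq_refl)
  then have "(SOME u. u \<in> cls v) \<in> cls v" by (rule someI)
  then have "peq (v @ w) ((SOME u. u \<in> cls v) @ w)"
    using peq_append_cong[of v _ "[]" w] by (simp add: cls_def)
  then show ?thesis
    unfolding rmul_word_def cls_eq_iff by (rule peq_sym)
qed

lemma rmul_word_in_Gamma [simp]: "rmul_word C w \<in> Gamma"
  by (simp add: rmul_word_def)

lemma rmul_word_Nil [simp]: "C \<in> Gamma \<Longrightarrow> rmul_word C [] = C"
  by (erule GammaE) simp

lemma rmul_word_rmul_word [simp]:
  "C \<in> Gamma \<Longrightarrow> rmul_word (rmul_word C u) v = rmul_word C (u @ v)"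
  by (erule GammaE) simp

lemma rmul_word_peq: "peq u v \<Longrightarrow> rmul_word C u = rmul_word C v"
  unfolding rmul_word_def cls_eq_iff by (rule peq_append_cong[of _ _ _ "[]", simplified])

lemma rmul_word_append_word_inv [simp]:
  "C \<in> Gamma \<Longrightarrow> rmul_word C (w @ word_inv w) = C"
  "C \<in> Gamma \<Longrightarrow> rmul_word C (word_inv w @ w) = C"
  using rmul_word_peq[OF peq_append_word_inv] rmul_word_peq[OF peq_word_inv_append] by simp_all

lemma rmul_word_cancel [simp]:
  "C \<in> Gamma \<Longrightarrow> rmul_word C [(g, True), (g, False)] = C"
  "C \<in> Gamma \<Longrightarrow> rmul_word C [(g, False), (g, True)] = C"
  using rmul_word_append_word_inv[of C "[(g, True)]"] by (simp_all add: linv_def)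

lemmas rmul_word_quotients =
  peq_right_quotients[THEN rmul_word_peq] peq_left_quotients[THEN rmul_word_peq]

definition shift :: "letter list \<Rightarrow> (letter list set \<Rightarrow> complex) \<Rightarrow> letter list set \<Rightarrow> complex" where
  "shift w f = (\<lambda>h. if h \<in> Gamma then f (rmul_word h w) else 0)"

lemma Uop_eq_shift: "Uop g = shift [(g, False)]"
  by (simp add: fun_eq_iff Uop_def shift_def rmul_inv_eq_rmul_word)

lemma l2_vanishes: "f \<in> l2 \<Longrightarrow> h \<notin> Gamma \<Longrightarrow> f h = 0"
  by (simp add: l2_def)

lemma summable_on_rmul_word_iff:
  "(\<lambda>h. F (rmul_word h w)) summable_on Gamma \<longleftrightarrow> F summable_on Gamma"
  by (rule summable_on_reindex_bij_witness[where j = "\<lambda>h. rmul_word h w"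
        and i = "\<lambda>h. rmul_word h (word_inv w)"]) auto

lemma infsum_rmul_word: "infsum (\<lambda>h. F (rmul_word h w)) Gamma = infsum F Gamma"
  by (rule infsum_reindex_bij_witness[where j = "\<lambda>h. rmul_word h w"
        and i = "\<lambda>h. rmul_word h (word_inv w)"]) auto

lemma norm_add_power2_le: "(norm (x + y))\<^sup>2 \<le> 2 * (norm x)\<^sup>2 + 2 * (norm y)\<^sup>2"
proof -
  have "(norm (x + y))\<^sup>2 \<le> (norm x + norm y)\<^sup>2"
    by (simp add: norm_triangle_ineq power_mono)
  also have "\<dots> \<le> 2 * (norm x)\<^sup>2 + 2 * (norm y)\<^sup>2"
    using sum_squares_bound[of "norm x" "norm y"] by (simp add: power2_sum)
  finally show ?thesis .
qed

lemma l2_add: assumes "f \<in> l2" "g \<in> l2" shows "(\<lambda>h. f h + g h) \<in> l2"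
proof -
  have "(\<lambda>h. 2 * (cmod (f h))\<^sup>2 + 2 * (cmod (g h))\<^sup>2) summable_on Gamma"
    using assms by (intro summable_on_add summable_on_cmult_right) (auto simp: l2_def)
  then have "(\<lambda>h. (cmod (f h + g h))\<^sup>2) summable_on Gamma"
    by (rule summable_on_comparison_test) (auto simp: norm_add_power2_le)
  then show ?thesis using assms by (auto simp: l2_def)
qed

lemma l2_scale: assumes "f \<in> l2" shows "(\<lambda>h. a * f h) \<in> l2"
proof -
  have "(\<lambda>h. (cmod a)\<^sup>2 * (cmod (f h))\<^sup>2) summable_on Gamma"
    using assms by (intro summable_on_cmult_right) (auto simp: l2_def)
  then show ?thesis using assms by (auto simp: l2_def norm_mult power_mult_distrib)
qed

lemma l2_lincomb3:
  "f \<in> l2 \<Longrightarrow> g \<in> l2 \<Longrightarrow> k \<in> l2 \<Longrightarrow> (\<lambda>h. a * f h + b * g h + c * k h) \<in> l2"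
  by (intro l2_add l2_scale)

lemma shift_l2: assumes "f \<in> l2" shows "shift w f \<in> l2"
proof -
  have "(\<lambda>h. (cmod (f (rmul_word h w)))\<^sup>2) summable_on Gamma"
    using assms by (simp add: summable_on_rmul_word_iff[where F = "\<lambda>h. (cmod (f h))\<^sup>2"] l2_def)
  then have "(\<lambda>h. (cmod (shift w f h))\<^sup>2) summable_on Gamma"
    by (rule summable_on_cong[THEN iffD1, rotated]) (simp add: shift_def)
  then show ?thesis by (simp add: l2_def shift_def)
qed

lemma l2_inner_summable:
  assumes "f \<in> l2" "g \<in> l2" shows "(\<lambda>h. cnj (f h) * g h) summable_on Gamma"
proof -
  have "(\<lambda>h. (cmod (f h))\<^sup>2 + (cmod (g h))\<^sup>2) summable_on Gamma"
    using assms by (intro summable_on_add) (auto simp: l2_def)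
  then have "(\<lambda>h. norm (cnj (f h) * g h)) summable_on Gamma"
  proof (rule summable_on_comparison_test)
    fix h
    have "2 * (cmod (f h) * cmod (g h)) \<le> (cmod (f h))\<^sup>2 + (cmod (g h))\<^sup>2"
      using sum_squares_bound[of "cmod (f h)" "cmod (g h)"] by (simp add: mult.assoc)
    moreover have "0 \<le> cmod (f h) * cmod (g h)" by simp
    ultimately have "cmod (f h) * cmod (g h) \<le> (cmod (f h))\<^sup>2 + (cmod (g h))\<^sup>2"
      by linarith
    then show "norm (cnj (f h) * g h) \<le> (cmod (f h))\<^sup>2 + (cmod (g h))\<^sup>2"
      by (simp add: norm_mult)
  qed simp
  then show ?thesis by (simp add: summable_on_iff_abs_summable_on_complex)
qed

lemma l2_inner_commute: "l2_inner g f = cnj (l2_inner f g)"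
  unfolding l2_inner_def infsum_cnj[symmetric] by (simp add: mult.commute)

lemma l2_inner_lincomb3_right:
  assumes "f \<in> l2" "g1 \<in> l2" "g2 \<in> l2" "g3 \<in> l2"
  shows "l2_inner f (\<lambda>h. a * g1 h + b * g2 h + c * g3 h)
       = a * l2_inner f g1 + b * l2_inner f g2 + c * l2_inner f g3"
proof -
  have "l2_inner f (\<lambda>h. a * g1 h + b * g2 h + c * g3 h)
      = infsum (\<lambda>h. a * (cnj (f h) * g1 h) + b * (cnj (f h) * g2 h) + c * (cnj (f h) * g3 h)) Gamma"
    unfolding l2_inner_def by (simp add: algebra_simps)
  also have "\<dots> = a * l2_inner f g1 + b * l2_inner f g2 + c * l2_inner f g3"
    using l2_inner_summable[OF assms(1)] assms(2-4) unfolding l2_inner_def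
    by (simp add: infsum_add summable_on_add summable_on_cmult_right infsum_cmult_right)
  finally show ?thesis .
qed

lemma l2_inner_shift_left: "l2_inner (shift w f) g = l2_inner f (shift (word_inv w) g)"
  unfolding l2_inner_def shift_def
  using infsum_rmul_word[where F = "\<lambda>k. cnj (f k) * g (rmul_word k (word_inv w))" and w = w]
  by (simp cong: infsum_cong)

definition ket :: "letter list set \<Rightarrow> letter list set \<Rightarrow> complex" where
  "ket k = (\<lambda>h. if h = k then 1 else 0)"

lemma ket_l2: assumes "k \<in> Gamma" shows "ket k \<in> l2"
proof -
  have "(\<lambda>h. (cmod (ket k h))\<^sup>2) summable_on Gamma \<longleftrightarrow> (\<lambda>h. (cmod (ket k h))\<^sup>2) summable_on {k}"
    by (rule summable_on_cong_neutral) (use assms in \<open>auto simp: ket_def\<close>)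
  then show ?thesis using assms by (auto simp: l2_def ket_def)
qed

lemma l2_inner_ket: assumes "k \<in> Gamma" shows "l2_inner (ket k) f = f k"
proof -
  have "l2_inner (ket k) f = infsum (\<lambda>h. cnj (ket k h) * f h) {k}"
    unfolding l2_inner_def by (rule infsum_cong_neutral) (use assms in \<open>auto simp: ket_def\<close>)
  then show ?thesis by (simp add: ket_def)
qed

section \<open>The walk and its adjoint\<close>

lemma walk_eq_shift:
  "walk c0 c1 c2 f =
     (\<lambda>h. c0 * shift [(X, False)] f h + c1 * shift [(Y, False)] f h + c2 * shift [(Z, False)] f h)"
  by (simp add: walk_def Uop_eq_shift)

definition walk_adj ::
  "complex \<Rightarrow> complex \<Rightarrow> complex \<Rightarrow> (letter list set \<Rightarrow> complex) \<Rightarrow> letter list set \<Rightarrow> complex" where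
  "walk_adj c0 c1 c2 f =
     (\<lambda>h. cnj c0 * shift [(X, True)] f h + cnj c1 * shift [(Y, True)] f h + cnj c2 * shift [(Z, True)] f h)"

lemma walk_l2: "f \<in> l2 \<Longrightarrow> walk c0 c1 c2 f \<in> l2"
  by (simp add: walk_eq_shift l2_lincomb3 shift_l2)

lemma walk_adj_l2: "f \<in> l2 \<Longrightarrow> walk_adj c0 c1 c2 f \<in> l2"
  by (simp add: walk_adj_def l2_lincomb3 shift_l2)

lemma l2_inner_walk_left:
  assumes "f \<in> l2" "g \<in> l2"
  shows "l2_inner (walk c0 c1 c2 f) g = l2_inner f (walk_adj c0 c1 c2 g)"
proof -
  have "l2_inner g (shift [(a, False)] f) = cnj (l2_inner f (shift [(a, True)] g))" for a
    by (subst l2_inner_commute) (simp add: l2_inner_shift_left linv_def)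
  then have "l2_inner g (walk c0 c1 c2 f) = cnj (l2_inner f (walk_adj c0 c1 c2 g))"
    using assms by (simp add: walk_eq_shift walk_adj_def l2_inner_lincomb3_right shift_l2)
  then show ?thesis by (simp add: l2_inner_commute[of "walk c0 c1 c2 f"])
qed

lemma walk_apply:
  "h \<in> Gamma \<Longrightarrow> walk c0 c1 c2 f h =
     c0 * f (rmul_word h [(X, False)]) + c1 * f (rmul_word h [(Y, False)]) + c2 * f (rmul_word h [(Z, False)])"
  by (simp add: walk_eq_shift shift_def)

lemma walk_adj_apply:
  "h \<in> Gamma \<Longrightarrow> walk_adj c0 c1 c2 f h =
     cnj c0 * f (rmul_word h [(X, True)]) + cnj c1 * f (rmul_word h [(Y, True)])
     + cnj c2 * f (rmul_word h [(Z, True)])"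
  by (simp add: walk_adj_def shift_def)

lemma walk_adj_walk:
  assumes "g \<in> l2"
  shows "walk_adj c0 c1 c2 (walk c0 c1 c2 g) =
    (\<lambda>h. (cnj c0 * c0 + cnj c1 * c1 + cnj c2 * c2) * g h
       + (cnj c0 * c1 + cnj c1 * c2 + cnj c2 * c0) * shift [(X, True), (Y, False)] g h
       + cnj (cnj c0 * c1 + cnj c1 * c2 + cnj c2 * c0) * shift [(Y, True), (X, False)] g h)"
proof
  fix h
  show "walk_adj c0 c1 c2 (walk c0 c1 c2 g) h = (cnj c0 * c0 + cnj c1 * c1 + cnj c2 * c2) * g h
       + (cnj c0 * c1 + cnj c1 * c2 + cnj c2 * c0) * shift [(X, True), (Y, False)] g h
       + cnj (cnj c0 * c1 + cnj c1 * c2 + cnj c2 * c0) * shift [(Y, True), (X, False)] g h"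
  proof (cases "h \<in> Gamma")
    case True
    then show ?thesis
      by (simp add: walk_apply walk_adj_apply shift_def rmul_word_quotients algebra_simps)
  next
    case False
    then show ?thesis using assms by (simp add: walk_adj_def shift_def l2_vanishes)
  qed
qed

lemma walk_walk_adj:
  assumes "g \<in> l2"
  shows "walk c0 c1 c2 (walk_adj c0 c1 c2 g) =
    (\<lambda>h. (cnj c0 * c0 + cnj c1 * c1 + cnj c2 * c2) * g h
       + cnj (cnj c0 * c1 + cnj c1 * c2 + cnj c2 * c0) * shift [(X, False), (Y, True)] g h
       + (cnj c0 * c1 + cnj c1 * c2 + cnj c2 * c0) * shift [(Y, False), (X, True)] g h)"
proof
  fix h
  show "walk c0 c1 c2 (walk_adj c0 c1 c2 g) h = (cnj c0 * c0 + cnj c1 * c1 + cnj c2 * c2) * g h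
       + cnj (cnj c0 * c1 + cnj c1 * c2 + cnj c2 * c0) * shift [(X, False), (Y, True)] g h
       + (cnj c0 * c1 + cnj c1 * c2 + cnj c2 * c0) * shift [(Y, False), (X, True)] g h"
  proof (cases "h \<in> Gamma")
    case True
    then show ?thesis
      by (simp add: walk_apply walk_adj_apply shift_def rmul_word_quotients algebra_simps)
  next
    case False
    then show ?thesis using assms by (simp add: walk_eq_shift shift_def l2_vanishes)
  qed
qed

section \<open>Unitary circulant matrices of order 3\<close>

(* Orthonormality of the rows of the circulant matrix with first row (c0, c1, c2). *)
definition unitary_circulant3 :: "complex \<Rightarrow> complex \<Rightarrow> complex \<Rightarrow> bool" where
  "unitary_circulant3 c0 c1 c2 \<longleftrightarrow>
     cnj c0 * c0 + cnj c1 * c1 + cnj c2 * c2 = 1 \<and> cnj c0 * c1 + cnj c1 * c2 + cnj c2 * c0 = 0"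

lemma cmod_eq_1_iff_mult_cnj: "cmod z = 1 \<longleftrightarrow> z * cnj z = 1"
proof -
  have "z * cnj z = 1 \<longleftrightarrow> (cmod z)\<^sup>2 = 1"
    by (metis complex_norm_square of_real_eq_1_iff)
  also have "\<dots> \<longleftrightarrow> cmod z = 1"
    by (auto simp: power2_eq_1_iff) (use norm_ge_zero[of z] in linarith)
  finally show ?thesis ..
qed

lemma cmod_eq_1_iff_cis: "cmod z = 1 \<longleftrightarrow> (\<exists>\<theta>. z = cis \<theta>)"
proof
  assume unit: "cmod z = 1"
  then have "cis (Arg z) = sgn z"
    by (intro cis_Arg) auto
  also have "sgn z = z"
    using unit by (simp add: sgn_div_norm)
  finally show "\<exists>\<theta>. z = cis \<theta>" by metis
qed auto

lemma cis_two_pi_third: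
  "cnj (cis (2*pi/3)) = cis (-(2*pi/3))"
  "cnj (cis (-(2*pi/3))) = cis (2*pi/3)"
  "cis (2*pi/3) * cis (-(2*pi/3)) = 1"
  "1 + cis (2*pi/3) + cis (-(2*pi/3)) = 0"
  by (simp_all add: cis_cnj cis_mult complex_eq_iff cos_120 sin_120)

(* For (w, q) = (1, 1), (\<omega>, \<omega>^2), (\<omega>^2, \<omega>) with \<omega> a primitive cube root of unity,
   the left-hand side is the squared modulus of an eigenvalue of the circulant. *)
lemma circulant3_eigenvalue_norm:
  assumes "cnj w = q" "w * q = 1" "w * w = q" "q * q = w"
  shows "(c0 + q * c1 + w * c2) * cnj (c0 + q * c1 + w * c2) =
    (cnj c0 * c0 + cnj c1 * c1 + cnj c2 * c2) + q * (cnj c0 * c1 + cnj c1 * c2 + cnj c2 * c0)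
    + w * cnj (cnj c0 * c1 + cnj c1 * c2 + cnj c2 * c0)"
proof -
  have cnj_q: "cnj q = w"
    using assms(1) by auto
  show ?thesis
    unfolding complex_cnj_add complex_cnj_mult complex_cnj_cnj assms(1) cnj_q
    using assms(2-4) by algebra
qed

lemma unitary_circulant3_iff_eigenvalues:
  "unitary_circulant3 c0 c1 c2 \<longleftrightarrow>
     cmod (c0 + c1 + c2) = 1 \<and>
     cmod (c0 + cis (-(2*pi/3)) * c1 + cis (2*pi/3) * c2) = 1 \<and>
     cmod (c0 + cis (2*pi/3) * c1 + cis (-(2*pi/3)) * c2) = 1"
proof -
  define w q where "w = cis (2*pi/3)" and "q = cis (-(2*pi/3))"
  have wq: "cnj w = q" "cnj q = w" "w * q = 1" "1 + w + q = 0"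
    unfolding w_def q_def by (fact cis_two_pi_third)+
  have sq: "w * w = q" "q * q = w"
    using wq(3,4) by algebra+
  define N S where "N = cnj c0 * c0 + cnj c1 * c1 + cnj c2 * c2"
    and "S = cnj c0 * c1 + cnj c1 * c2 + cnj c2 * c0"
  have "(c0 + c1 + c2) * cnj (c0 + c1 + c2) = N + S + cnj S"
    using circulant3_eigenvalue_norm[of 1 1 c0 c1 c2] by (simp add: N_def S_def)
  moreover have "(c0 + q * c1 + w * c2) * cnj (c0 + q * c1 + w * c2) = N + q * S + w * cnj S"
    using circulant3_eigenvalue_norm[of w q c0 c1 c2] wq sq by (simp add: N_def S_def)
  moreover have "(c0 + w * c1 + q * c2) * cnj (c0 + w * c1 + q * c2) = N + w * S + q * cnj S"
    using circulant3_eigenvalue_norm[of q w c0 c1 c2] wq sq by (simp add: N_def S_def mult.commute)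
  moreover have "N = 1 \<and> S = 0 \<longleftrightarrow>
      N + S + cnj S = 1 \<and> N + q * S + w * cnj S = 1 \<and> N + w * S + q * cnj S = 1"
  proof
    assume eigen: "N + S + cnj S = 1 \<and> N + q * S + w * cnj S = 1 \<and> N + w * S + q * cnj S = 1"
    have "3 * N = 3"
      using eigen wq(4) by algebra
    moreover have "3 * S = 0"
      using eigen wq(3,4) sq by algebra
    ultimately show "N = 1 \<and> S = 0" by simp
  qed simp
  ultimately show ?thesis
    by (simp add: unitary_circulant3_def cmod_eq_1_iff_mult_cnj N_def S_def w_def q_def)
qed

lemma unimodular_triple_iff_cis:
  "cmod a = 1 \<and> cmod b = 1 \<and> cmod c = 1 \<longleftrightarrow>
     (\<exists>\<theta> \<phi>1 \<phi>2. a = cis \<theta> \<and> b = cis \<theta> * cis \<phi>1 \<and> c = cis \<theta> * cis \<phi>2)"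
proof
  assume "cmod a = 1 \<and> cmod b = 1 \<and> cmod c = 1"
  then obtain \<theta> \<beta> \<gamma> where "a = cis \<theta>" "b = cis \<beta>" "c = cis \<gamma>"
    by (meson cmod_eq_1_iff_cis)
  then have "a = cis \<theta> \<and> b = cis \<theta> * cis (\<beta> - \<theta>) \<and> c = cis \<theta> * cis (\<gamma> - \<theta>)"
    by (simp add: cis_mult)
  then show "\<exists>\<theta> \<phi>1 \<phi>2. a = cis \<theta> \<and> b = cis \<theta> * cis \<phi>1 \<and> c = cis \<theta> * cis \<phi>2"
    by blast
qed (auto simp: norm_mult)

lemma unitary_circulant3_iff_param:
  "unitary_circulant3 c0 c1 c2 \<longleftrightarrow>
     (\<exists>\<theta> \<phi>1 \<phi>2 :: real.
        c0 = cis \<theta> * ((1 + cis \<phi>1 + cis \<phi>2) / 3) \<and>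
        c1 = cis \<theta> * ((1 + cis (2*pi/3) * cis \<phi>1 + cis (-(2*pi/3)) * cis \<phi>2) / 3) \<and>
        c2 = cis \<theta> * ((1 + cis (-(2*pi/3)) * cis \<phi>1 + cis (2*pi/3) * cis \<phi>2) / 3))"
proof -
  define w q where "w = cis (2*pi/3)" and "q = cis (-(2*pi/3))"
  have wq: "w * q = 1" "1 + w + q = 0"
    unfolding w_def q_def by (fact cis_two_pi_third)+
  have sq: "w * w = q" "q * q = w"
    using wq by algebra+
  define L0 L1 L2 where "L0 = c0 + c1 + c2" and "L1 = c0 + q * c1 + w * c2"
    and "L2 = c0 + w * c1 + q * c2"
  have dft_inverse: "L0 = a \<and> L1 = b \<and> L2 = c \<longleftrightarrow>
      3 * c0 = a + b + c \<and> 3 * c1 = a + w * b + q * c \<and> 3 * c2 = a + q * b + w * c" for a b c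
    unfolding L0_def L1_def L2_def using wq sq by (intro iffI conjI; elim conjE; algebra)
  have "unitary_circulant3 c0 c1 c2 \<longleftrightarrow> cmod L0 = 1 \<and> cmod L1 = 1 \<and> cmod L2 = 1"
    by (simp add: unitary_circulant3_iff_eigenvalues L0_def L1_def L2_def w_def q_def)
  also have "\<dots> \<longleftrightarrow> (\<exists>\<theta> \<phi>1 \<phi>2. L0 = cis \<theta> \<and> L1 = cis \<theta> * cis \<phi>1 \<and> L2 = cis \<theta> * cis \<phi>2)"
    by (rule unimodular_triple_iff_cis)
  also have "\<dots> \<longleftrightarrow> (\<exists>\<theta> \<phi>1 \<phi>2 :: real.
        c0 = cis \<theta> * ((1 + cis \<phi>1 + cis \<phi>2) / 3) \<and>
        c1 = cis \<theta> * ((1 + w * cis \<phi>1 + q * cis \<phi>2) / 3) \<and>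
        c2 = cis \<theta> * ((1 + q * cis \<phi>1 + w * cis \<phi>2) / 3))"
    unfolding dft_inverse by (simp add: field_simps)
  finally show ?thesis
    by (simp add: w_def q_def)
qed

section \<open>Unitarity of the walk\<close>

lemma walk_adj_walk_if_isometric:
  assumes "\<forall>f\<in>l2. \<forall>g\<in>l2. l2_inner (walk c0 c1 c2 f) (walk c0 c1 c2 g) = l2_inner f g"
    and "g \<in> l2" "k \<in> Gamma"
  shows "walk_adj c0 c1 c2 (walk c0 c1 c2 g) k = g k"
proof -
  have "walk_adj c0 c1 c2 (walk c0 c1 c2 g) k = l2_inner (ket k) (walk_adj c0 c1 c2 (walk c0 c1 c2 g))"
    using assms by (simp add: l2_inner_ket)
  also have "\<dots> = l2_inner (walk c0 c1 c2 (ket k)) (walk c0 c1 c2 g)"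
    using assms by (simp add: l2_inner_walk_left ket_l2 walk_l2)
  also have "\<dots> = l2_inner (ket k) g"
    using assms ket_l2 by blast
  finally show ?thesis
    using assms by (simp add: l2_inner_ket)
qed

lemma unitary_circulant3_if_unitary_walk:
  assumes "unitary_l2 (walk c0 c1 c2)"
  shows "unitary_circulant3 c0 c1 c2"
proof -
  define e :: "letter list set" where "e = cls []"
  define N where "N = cnj c0 * c0 + cnj c1 * c1 + cnj c2 * c2"
  define S where "S = cnj c0 * c1 + cnj c1 * c2 + cnj c2 * c0"
  have ket_e_l2: "ket e \<in> l2"
    by (simp add: e_def ket_l2)
  have adj_walk: "walk_adj c0 c1 c2 (walk c0 c1 c2 (ket e)) k = ket e k" if "k \<in> Gamma" for k
    using assms ket_e_l2 that unfolding unitary_l2_def by (blast intro: walk_adj_walk_if_isometric)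
  have adj_walk_ket: "walk_adj c0 c1 c2 (walk c0 c1 c2 (ket e)) k =
      N * ket e k + S * ket e (rmul_word k [(X, True), (Y, False)])
      + cnj S * ket e (rmul_word k [(Y, True), (X, False)])" if "k \<in> Gamma" for k
    using that by (simp add: walk_adj_walk[OF ket_e_l2] N_def S_def shift_def)
  have "N = 1"
    using adj_walk_ket[of e] adj_walk[of e] cls_xy_inv_nontrivial by (simp add: ket_def e_def)
  moreover have "S = 0"
  proof -
    have "cls [(Y, True), (X, False), (X, True), (Y, False)] = e"
      using peq_append_word_inv[of "[(Y, True), (X, False)]"] by (simp add: e_def cls_eq_iff linv_def)
    then show ?thesis
      using adj_walk_ket[of "cls [(Y, True), (X, False)]"] adj_walk[of "cls [(Y, True), (X, False)]"]
        cls_xy_inv_nontrivial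
      by (simp add: ket_def e_def)
  qed
  ultimately show ?thesis
    by (simp add: unitary_circulant3_def N_def S_def)
qed

lemma unitary_walk_if_unitary_circulant3:
  assumes "unitary_circulant3 c0 c1 c2"
  shows "unitary_l2 (walk c0 c1 c2)"
proof -
  have adj_walk: "walk_adj c0 c1 c2 (walk c0 c1 c2 g) = g"
    and walk_adj: "walk c0 c1 c2 (walk_adj c0 c1 c2 g) = g" if "g \<in> l2" for g
    using assms that by (simp_all add: unitary_circulant3_def walk_adj_walk walk_walk_adj)
  show ?thesis
    unfolding unitary_l2_def
  proof (intro conjI ballI)
    show "walk c0 c1 c2 f \<in> l2" if "f \<in> l2" for f
      using that by (rule walk_l2)
    show "l2_inner (walk c0 c1 c2 f) (walk c0 c1 c2 g) = l2_inner f g" if "f \<in> l2" "g \<in> l2" for f g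
      using that by (simp add: l2_inner_walk_left walk_l2 adj_walk)
    show "\<exists>f\<in>l2. walk c0 c1 c2 f = g" if "g \<in> l2" for g
      using that walk_adj walk_adj_l2 by blast
  qed
qed

lemma unitary_walk_iff: "unitary_l2 (walk c0 c1 c2) \<longleftrightarrow> unitary_circulant3 c0 c1 c2"
  using unitary_circulant3_if_unitary_walk unitary_walk_if_unitary_circulant3 by blast

theorem mainTheorem4:
  shows "(\<forall>Wx Wy Wz. hsqw Wx Wy Wz \<longleftrightarrow>
            (Wx \<noteq> 0 \<and> Wy \<noteq> 0 \<and> Wz \<noteq> 0 \<and>
             (\<exists>\<theta> \<phi>1 \<phi>2 :: real.
                Wx = cis \<theta> * ((1 + cis \<phi>1 + cis \<phi>2) / 3) \<and>
                Wy = cis \<theta> * ((1 + cis (2*pi/3) * cis \<phi>1 + cis (-(2*pi/3)) * cis \<phi>2) / 3) \<and>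
                Wz = cis \<theta> * ((1 + cis (-(2*pi/3)) * cis \<phi>1 + cis (2*pi/3) * cis \<phi>2) / 3))))
         \<and> (\<exists>Wx Wy Wz. hsqw Wx Wy Wz)"
proof -
  have "hsqw (1/3) ((1 + \<i> * sqrt 3) / 3) ((1 - \<i> * sqrt 3) / 3)"
    by (simp add: hsqw_def unitary_walk_iff unitary_circulant3_def complex_eq_iff algebra_simps)
  then show ?thesis
    unfolding hsqw_def unitary_walk_iff unitary_circulant3_iff_param by blast
qed

end
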